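(* For every integer $n \geq 1$, $n$ divides $D_n$.
   Context: A linear arrangement of $\{1,\ldots,n\}$ is a sequence $a_1\cdots a_n$ in which each of $1,\ldots,n$ appears exactly once. It contains the pattern $ij$ if $a_t=i$ and $a_{t+1}=j$ for some $t$; otherwise it avoids it. $D_n$ is the number of linear arrangements of $\{1,\ldots,n\}$ avoiding all of the patterns $12, 23, \ldots, (n-1)n, n1$. *)

theory Defs
  imports Main
begin

definition linear_arrangements :: "nat \<Rightarrow> nat list set" where
  "linear_arrangements n = {xs. distinct xs \<and> set xs = {1..n}}"

definition contains_pattern :: "nat list \<Rightarrow> nat \<Rightarrow> nat \<Rightarrow> bool" where
  "contains_pattern xs i j \<longleftrightarrow> (\<exists>t. t + 1 < length xs \<and> xs ! t = i \<and> xs ! (t + 1) = j)"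

definition cyclic_patterns :: "nat \<Rightarrow> (nat \<times> nat) set" where
  "cyclic_patterns n = {(i, i + 1) | i. 1 \<le> i \<and> i < n} \<union> {(n, 1)}"

definition D :: "nat \<Rightarrow> nat" where
  "D n = card {xs \<in> linear_arrangements n.
                 \<forall>(i, j) \<in> cyclic_patterns n. \<not> contains_pattern xs i j}"

end

theory Submission
  imports Defs
begin

text \<open>Relabelling every entry by \<open>x \<mapsto> x + k (mod n)\<close> maps the set of forbidden patterns
  \<open>(i, i + 1 mod n)\<close> onto itself, so it permutes the arrangements avoiding them. This action
  of the cyclic group of order \<open>n\<close> is free, because the first entry is moved by every
  nontrivial shift. Hence the avoiding arrangements are in bijection with pairs of a shift
  \<open>k < n\<close> and an avoiding arrangement that starts with 1, and \<open>D n\<close> is a multiple of \<open>n\<close>.\<close>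

definition cyclic_shift :: "nat \<Rightarrow> nat \<Rightarrow> nat \<Rightarrow> nat" where
  "cyclic_shift n k x = (x - 1 + k) mod n + 1"

lemma cyclic_shift_in_range: "n \<ge> 1 \<Longrightarrow> cyclic_shift n k x \<in> {1..n}"
  unfolding cyclic_shift_def by (auto simp: Suc_le_eq)

lemma cyclic_shift_add:
  assumes "x \<ge> 1"
  shows "cyclic_shift n a (cyclic_shift n b x) = cyclic_shift n (a + b) x"
proof -
  have "cyclic_shift n a (cyclic_shift n b x) = cyclic_shift n (b + a) x"
    using assms unfolding cyclic_shift_def by (simp add: mod_add_left_eq add.assoc)
  then show ?thesis by (simp add: add.commute)
qed

lemma cyclic_shift_multiple:
  assumes "x \<in> {1..n}" "n dvd k"
  shows "cyclic_shift n k x = x"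
proof -
  have "(x - 1 + k) mod n = (x - 1) mod n"
    using assms(2) by (metis add.right_neutral dvd_eq_mod_eq_0 mod_add_right_eq)
  then show ?thesis
    using assms(1) unfolding cyclic_shift_def by auto
qed

lemma cyclic_shift_one:
  "x \<in> {1..n} \<Longrightarrow> cyclic_shift n 1 x = (if x = n then 1 else x + 1)"
  unfolding cyclic_shift_def by auto

lemma inj_on_cyclic_shift: "inj_on (cyclic_shift n k) {1..n}"
proof (rule inj_onI)
  fix x y assume x: "x \<in> {1..n}" and y: "y \<in> {1..n}"
    and "cyclic_shift n k x = cyclic_shift n k y"
  then have "(x - 1 + k) mod n = (y - 1 + k) mod n"
    unfolding cyclic_shift_def by simp
  then have "(x - 1) mod n = (y - 1) mod n"
    by (simp add: nat_mod_eq_iff)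
  with x y show "x = y" by auto
qed

lemma cyclic_shift_image: "n \<ge> 1 \<Longrightarrow> cyclic_shift n k ` {1..n} = {1..n}"
  by (meson endo_inj_surj finite_atLeastAtMost image_subsetI cyclic_shift_in_range
      inj_on_cyclic_shift)

lemma cyclic_patterns_eq:
  assumes "n \<ge> 1"
  shows "cyclic_patterns n = (\<lambda>i. (i, cyclic_shift n 1 i)) ` {1..n}"
proof (rule set_eqI)
  fix p :: "nat \<times> nat"
  obtain i j where "p = (i, j)" by fastforce
  then show "p \<in> cyclic_patterns n \<longleftrightarrow> p \<in> (\<lambda>i. (i, cyclic_shift n 1 i)) ` {1..n}"
    using assms unfolding cyclic_patterns_def
    by (auto simp: cyclic_shift_one[simplified] image_iff split: if_splits)
qed

lemma map_cyclic_shift_linear_arrangements: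
  assumes "n \<ge> 1" "xs \<in> linear_arrangements n"
  shows "map (cyclic_shift n k) xs \<in> linear_arrangements n"
  using assms inj_on_cyclic_shift[of n k] cyclic_shift_image[of n k]
  unfolding linear_arrangements_def by (simp add: distinct_map)

definition avoids_successor :: "nat \<Rightarrow> nat list \<Rightarrow> bool" where
  "avoids_successor n xs \<longleftrightarrow>
     (\<forall>t. t + 1 < length xs \<longrightarrow> xs ! (t + 1) \<noteq> cyclic_shift n 1 (xs ! t))"

lemma avoids_cyclic_patterns_iff:
  assumes "n \<ge> 1" "set xs \<subseteq> {1..n}"
  shows "(\<forall>(i, j) \<in> cyclic_patterns n. \<not> contains_pattern xs i j) \<longleftrightarrow> avoids_successor n xs"
proof -
  have "(\<forall>i \<in> {1..n}. \<not> contains_pattern xs i (cyclic_shift n 1 i)) \<longleftrightarrow> avoids_successor n xs"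
  proof
    assume avoid: "\<forall>i \<in> {1..n}. \<not> contains_pattern xs i (cyclic_shift n 1 i)"
    show "avoids_successor n xs"
      unfolding avoids_successor_def
    proof (intro allI impI)
      fix t assume t: "t + 1 < length xs"
      then have "xs ! t \<in> {1..n}"
        using assms(2) nth_mem[of t xs] by (meson add_lessD1 subsetD)
      then show "xs ! (t + 1) \<noteq> cyclic_shift n 1 (xs ! t)"
        using avoid t unfolding contains_pattern_def by blast
    qed
  qed (auto simp: avoids_successor_def contains_pattern_def)
  then show ?thesis
    by (simp add: cyclic_patterns_eq[OF assms(1)])
qed

lemma avoids_successor_map_cyclic_shift:
  assumes "n \<ge> 1" "set xs \<subseteq> {1..n}" "avoids_successor n xs"
  shows "avoids_successor n (map (cyclic_shift n k) xs)"
  unfolding avoids_successor_def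
proof (intro allI impI)
  fix t assume t: "t + 1 < length (map (cyclic_shift n k) xs)"
  then have "xs ! t \<in> set xs" "xs ! (t + 1) \<in> set xs"
    by auto
  then have x: "xs ! t \<in> {1..n}" "xs ! (t + 1) \<in> {1..n}"
    using assms(2) by blast+
  have "xs ! (t + 1) \<noteq> cyclic_shift n 1 (xs ! t)"
    using assms(3) t unfolding avoids_successor_def by simp
  then have "cyclic_shift n k (xs ! (t + 1)) \<noteq> cyclic_shift n k (cyclic_shift n 1 (xs ! t))"
    using inj_onD[OF inj_on_cyclic_shift] x cyclic_shift_in_range[OF assms(1)] by metis
  moreover have "cyclic_shift n k (cyclic_shift n 1 (xs ! t)) =
      cyclic_shift n 1 (cyclic_shift n k (xs ! t))"
    using x by (simp add: cyclic_shift_add add.commute)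
  ultimately show "map (cyclic_shift n k) xs ! (t + 1) \<noteq>
      cyclic_shift n 1 (map (cyclic_shift n k) xs ! t)"
    using t by simp
qed

lemma map_cyclic_shift_cancel:
  assumes "set xs \<subseteq> {1..n}" "n dvd a + b"
  shows "map (cyclic_shift n a) (map (cyclic_shift n b) xs) = xs"
proof -
  have "cyclic_shift n a (cyclic_shift n b x) = x" if "x \<in> set xs" for x
    using assms that cyclic_shift_multiple[of x n "a + b"] by (auto simp: cyclic_shift_add)
  then show ?thesis
    by (simp add: map_idI)
qed

definition cyclic_avoiders :: "nat \<Rightarrow> nat list set" where
  "cyclic_avoiders n = {xs \<in> linear_arrangements n. avoids_successor n xs}"

lemma D_eq_card_cyclic_avoiders:
  assumes "n \<ge> 1"
  shows "D n = card (cyclic_avoiders n)"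
proof -
  have "xs \<in> linear_arrangements n \<Longrightarrow>
      (\<forall>(i, j) \<in> cyclic_patterns n. \<not> contains_pattern xs i j) \<longleftrightarrow> avoids_successor n xs"
    for xs
    using avoids_cyclic_patterns_iff[OF assms] unfolding linear_arrangements_def by simp
  then show ?thesis
    unfolding D_def cyclic_avoiders_def by (metis (lifting))
qed

lemma set_cyclic_avoiders:
  "xs \<in> cyclic_avoiders n \<Longrightarrow> set xs = {1..n}"
  unfolding cyclic_avoiders_def linear_arrangements_def by simp

lemma map_cyclic_shift_cyclic_avoiders:
  assumes "n \<ge> 1" "xs \<in> cyclic_avoiders n"
  shows "map (cyclic_shift n k) xs \<in> cyclic_avoiders n"
proof -
  have "xs \<in> linear_arrangements n" "avoids_successor n xs"
    using assms(2) unfolding cyclic_avoiders_def by auto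
  then show ?thesis
    using map_cyclic_shift_linear_arrangements[OF assms(1)]
      avoids_successor_map_cyclic_shift[OF assms(1)] set_cyclic_avoiders[OF assms(2)]
    unfolding cyclic_avoiders_def by simp
qed

lemma hd_cyclic_avoiders:
  assumes "n \<ge> 1" "xs \<in> cyclic_avoiders n"
  shows "xs \<noteq> [] \<and> hd xs \<in> {1..n}"
  using assms set_cyclic_avoiders[OF assms(2)] hd_in_set[of xs] by fastforce

lemma bij_betw_cyclic_shift_cyclic_avoiders:
  assumes "n \<ge> 1"
  shows "bij_betw (\<lambda>(k, ys). map (cyclic_shift n k) ys)
           ({..<n} \<times> {ys \<in> cyclic_avoiders n. hd ys = 1}) (cyclic_avoiders n)"
    (is "bij_betw ?shift ?pairs _")
proof -
  define unshift where
    "unshift xs = (hd xs - 1, map (cyclic_shift n (n + 1 - hd xs)) xs)" for xs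
  have unshift_shift: "unshift (?shift (k, ys)) = (k, ys)"
    if "k < n" "ys \<in> cyclic_avoiders n" "hd ys = 1" for k ys
  proof -
    have "hd (map (cyclic_shift n k) ys) = k + 1"
      using that hd_cyclic_avoiders[OF assms] by (simp add: hd_map cyclic_shift_def)
    then show ?thesis
      using that map_cyclic_shift_cancel[of ys n "n - k" k] set_cyclic_avoiders
      by (simp add: unshift_def)
  qed
  have shift_unshift: "?shift (unshift xs) = xs" if "xs \<in> cyclic_avoiders n" for xs
  proof -
    have "hd xs - 1 + (n + 1 - hd xs) = n"
      using hd_cyclic_avoiders[OF assms that] by auto
    then show ?thesis
      using map_cyclic_shift_cancel set_cyclic_avoiders[OF that] by (simp add: unshift_def)
  qed
  have "unshift xs \<in> ?pairs" if "xs \<in> cyclic_avoiders n" for xs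
  proof -
    have "xs \<noteq> []" "hd xs \<in> {1..n}"
      using that hd_cyclic_avoiders[OF assms] by auto
    then have "hd (map (cyclic_shift n (n + 1 - hd xs)) xs) = 1"
      by (auto simp: hd_map cyclic_shift_def)
    then show ?thesis
      using \<open>hd xs \<in> {1..n}\<close> map_cyclic_shift_cyclic_avoiders[OF assms that]
      by (auto simp: unshift_def)
  qed
  then have "unshift ` cyclic_avoiders n \<subseteq> ?pairs"
    by blast
  moreover have "?shift ` ?pairs \<subseteq> cyclic_avoiders n"
    using map_cyclic_shift_cyclic_avoiders[OF assms] by auto
  ultimately show ?thesis
    using unshift_shift shift_unshift by (intro bij_betw_byWitness[where f' = unshift]) auto
qed

theorem corollary3p4:
  fixes n :: nat
  assumes "n \<ge> 1"
  shows "n dvd D n"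
proof -
  have "D n = card ({..<n} \<times> {ys \<in> cyclic_avoiders n. hd ys = 1})"
    using D_eq_card_cyclic_avoiders[OF assms]
      bij_betw_same_card[OF bij_betw_cyclic_shift_cyclic_avoiders[OF assms]] by simp
  also have "\<dots> = n * card {ys \<in> cyclic_avoiders n. hd ys = 1}"
    by (simp add: card_cartesian_product)
  finally show ?thesis by simp
qed

end
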